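(* Let $\mathcal{U}$ be any perturbation set, $c:\mathcal{X}\to\mathcal{Y}$ a concept, $D$ a distribution on $\mathcal{X}$, $\beta\in(0,1]$, $\epsilon'\ge0$, and $h_1,\dots,h_T:\mathcal{X}\to\mathcal{Y}$ classifiers. Write $R_t=\mathrm{Rob}_{\mathcal{U}^{-1}(\mathcal{U})}(h_t)$ and $\bar R_{1:t}=\bigcap_{s\le t}(\mathcal{X}\setminus R_s)$ (with $\bar R_{1:0}=\mathcal{X}$). Suppose that for every $1\le t\le T$ with $\Pr_{x\sim D}[\bar R_{1:t-1}]>0$, $$\Pr_{x\sim D}[x\in R_t\mid x\in\bar R_{1:t-1}]\ge\beta\quad\text{and}\quad\Pr_{x\sim D}[h_t(x)\neq c(x)\mid x\in\bar R_{1:t-1}]\le\epsilon'.$$ Then $\Pr_{x\sim D}[\bar R_{1:t}]\le(1-\beta)^t$ for all $t\le T$, and $$\Pr_{x\sim D}\big[\exists z\in\mathcal{U}(x):\ \mathrm{CAS}(h_1,\dots,h_T)(z)\neq c(x)\big]\le\frac{\epsilon'}{\beta}+(1-\beta)^T.$$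
   Context: A perturbation set is a map $\mathcal{U}:\mathcal{X}\to 2^{\mathcal{X}}$. For $z\in\mathcal{X}$ let $\mathcal{U}^{-1}(z)=\{x\in\mathcal{X}: z\in\mathcal{U}(x)\}$, and let $\mathcal{U}^{-1}(\mathcal{U})$ denote the perturbation set $\mathcal{U}^{-1}(\mathcal{U})(x)=\bigcup_{z\in\mathcal{U}(x)}\mathcal{U}^{-1}(z)$. For a classifier $h$ and perturbation set $\mathcal{V}$, $\mathrm{Rob}_{\mathcal{V}}(h)=\{x\in\mathcal{X}:\forall z\in\mathcal{V}(x),\ h(z)=h(x)\}$. Selective classifier: for $h:\mathcal{X}\to\mathcal{Y}$, $G_h(z)=y$ if $\mathcal{U}^{-1}(z)\neq\emptyset$ and $h(\tilde x)=y$ for all $\tilde x\in\mathcal{U}^{-1}(z)$, and $G_h(z)=\perp$ otherwise. Cascade: $\mathrm{CAS}(h_1,\dots,h_T)(z)=G_{h_s}(z)$ where $s=\min\{t\le T: G_{h_t}(z)\neq\perp\}$; if no such $t$ exists, it outputs a fixed arbitrary label. All events are assumed measurable. *)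

theory Defs
  imports "HOL-Probability.Probability"
begin

definition Uinv :: "('a \<Rightarrow> 'a set) \<Rightarrow> 'a \<Rightarrow> 'a set" where
  "Uinv U z = {x. z \<in> U x}"

definition UinvU :: "('a \<Rightarrow> 'a set) \<Rightarrow> 'a \<Rightarrow> 'a set" where
  "UinvU U x = (\<Union>z\<in>U x. Uinv U z)"

definition Rob :: "('a \<Rightarrow> 'a set) \<Rightarrow> ('a \<Rightarrow> 'b) \<Rightarrow> 'a set" where
  "Rob V h = {x. \<forall>z\<in>V x. h z = h x}"

text \<open>Selective classifier G_h; None encodes the abstention symbol \<bottom>.\<close>
definition G :: "('a \<Rightarrow> 'a set) \<Rightarrow> ('a \<Rightarrow> 'b) \<Rightarrow> 'a \<Rightarrow> 'b option" where
  "G U h z = (if Uinv U z \<noteq> {} \<and> (\<exists>y. \<forall>x\<in>Uinv U z. h x = y)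
              then Some (THE y. \<forall>x\<in>Uinv U z. h x = y) else None)"

text \<open>Cascade CAS(h_1,...,h_T), with y0 the fixed arbitrary fallback label.\<close>
definition CAS :: "('a \<Rightarrow> 'a set) \<Rightarrow> (nat \<Rightarrow> 'a \<Rightarrow> 'b) \<Rightarrow> nat \<Rightarrow> 'b \<Rightarrow> 'a \<Rightarrow> 'b" where
  "CAS U hs T y0 z =
     (if \<exists>t. 1 \<le> t \<and> t \<le> T \<and> G U (hs t) z \<noteq> None
      then the (G U (hs (LEAST t. 1 \<le> t \<and> t \<le> T \<and> G U (hs t) z \<noteq> None)) z)
      else y0)"

definition Rset :: "('a \<Rightarrow> 'a set) \<Rightarrow> (nat \<Rightarrow> 'a \<Rightarrow> 'b) \<Rightarrow> nat \<Rightarrow> 'a set" where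
  "Rset U hs t = Rob (UinvU U) (hs t)"

definition Rbar :: "('a \<Rightarrow> 'a set) \<Rightarrow> (nat \<Rightarrow> 'a \<Rightarrow> 'b) \<Rightarrow> nat \<Rightarrow> 'a set" where
  "Rbar U hs t = (\<Inter>s\<in>{1..t}. UNIV - Rset U hs s)"

definition cprob :: "'a measure \<Rightarrow> 'a set \<Rightarrow> 'a set \<Rightarrow> real" where
  "cprob D A B = measure D (A \<inter> B) / measure D B"

end

theory Submission
  imports Defs
begin

text \<open>
  Let \<open>z \<in> U x\<close> and let \<open>t\<close> be the first stage with \<open>x \<in> Rset U hs t\<close>. Then \<open>G U (hs t)\<close>
  does not abstain at \<open>z\<close>, so the cascade answers with the first non-abstaining stage
  \<open>s \<le> t\<close>, and since \<open>x \<in> Uinv U z\<close> that answer is \<open>hs s x\<close>, with \<open>x \<in> Rbar U hs (s - 1)\<close>.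
  So an attacked error lies in \<open>Rbar U hs T\<close> or in some \<open>Rbar U hs (s - 1) \<inter> {hs s \<noteq> c}\<close>.
  The conditional hypotheses shrink \<open>Rbar\<close> by a factor \<open>1 - \<beta>\<close> per stage and bound the
  stage-\<open>s\<close> error by \<open>\<epsilon>' (1 - \<beta>)^(s-1)\<close>; the geometric series sums to at most \<open>\<epsilon>'/\<beta>\<close>.
\<close>

lemma G_Some_imp_eq:
  assumes "x \<in> Uinv U z" and "G U h z = Some v"
  shows "v = h x"
  using assms unfolding G_def by (auto split: if_splits intro!: the_equality[symmetric])

lemma G_not_None_if_Rob:
  assumes "z \<in> U x" and "x \<in> Rob (UinvU U) h"
  shows "G U h z \<noteq> None"
proof -
  have "x \<in> Uinv U z" using assms(1) by (simp add: Uinv_def)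
  moreover have "\<forall>x'\<in>Uinv U z. h x' = h x"
    using assms by (auto simp: Rob_def UinvU_def)
  ultimately have "Uinv U z \<noteq> {} \<and> (\<exists>y. \<forall>x'\<in>Uinv U z. h x' = y)" by blast
  then show ?thesis unfolding G_def by simp
qed

lemma Rbar_0 [simp]: "Rbar U hs 0 = UNIV"
  by (simp add: Rbar_def)

lemma Rbar_Suc: "Rbar U hs (Suc n) = Rbar U hs n - Rset U hs (Suc n)"
  by (auto simp: Rbar_def le_Suc_eq)

lemma mem_Rbar_iff: "x \<in> Rbar U hs n \<longleftrightarrow> (\<forall>s\<in>{1..n}. x \<notin> Rset U hs s)"
  by (simp add: Rbar_def)

lemma CAS_eq_hs_on_Rbar_prefix:
  assumes z: "z \<in> U x" and not_Rbar: "x \<notin> Rbar U hs T"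
  shows "\<exists>s\<in>{1..T}. x \<in> Rbar U hs (s - 1) \<and> CAS U hs T y0 z = hs s x"
proof -
  let ?robust = "\<lambda>t. 1 \<le> t \<and> t \<le> T \<and> x \<in> Rset U hs t"
  let ?decides = "\<lambda>t. 1 \<le> t \<and> t \<le> T \<and> G U (hs t) z \<noteq> None"
  define t where "t = (LEAST t. ?robust t)"
  have "\<exists>t. ?robust t" using not_Rbar by (auto simp: mem_Rbar_iff)
  then have t: "?robust t" unfolding t_def by (rule LeastI_ex)
  have before_t: "\<not> ?robust r" if "r < t" for r
    using that unfolding t_def by (rule not_less_Least)
  have "?decides t"
    using t G_not_None_if_Rob[of z U x "hs t"] z by (simp add: Rset_def)
  define s where "s = (LEAST s. ?decides s)"
  have s: "?decides s" unfolding s_def by (rule LeastI) fact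
  have "s \<le> t" unfolding s_def by (rule Least_le) fact
  obtain v where v: "G U (hs s) z = Some v" using s by auto
  have "CAS U hs T y0 z = v"
    using \<open>?decides t\<close> v unfolding CAS_def s_def[symmetric] by auto
  also have "v = hs s x"
    using z by (intro G_Some_imp_eq[OF _ v]) (simp add: Uinv_def)
  finally have "CAS U hs T y0 z = hs s x" .
  moreover have "x \<in> Rbar U hs (s - 1)"
    using before_t \<open>s \<le> t\<close> s by (auto simp: mem_Rbar_iff)
  ultimately show ?thesis using s by auto
qed

lemma CAS_error_subset:
  "{x. \<exists>z\<in>U x. CAS U hs T y0 z \<noteq> c x}
     \<subseteq> Rbar U hs T \<union> (\<Union>s\<in>{1..T}. Rbar U hs (s - 1) \<inter> {x. hs s x \<noteq> c x})"
proof
  fix x assume "x \<in> {x. \<exists>z\<in>U x. CAS U hs T y0 z \<noteq> c x}"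
  then obtain z where "z \<in> U x" "CAS U hs T y0 z \<noteq> c x" by blast
  then show "x \<in> Rbar U hs T \<union> (\<Union>s\<in>{1..T}. Rbar U hs (s - 1) \<inter> {x. hs s x \<noteq> c x})"
    using CAS_eq_hs_on_Rbar_prefix[of z U x hs T y0] by (cases "x \<in> Rbar U hs T") auto
qed

lemma (in finite_measure) measure_Diff_le_of_cprob_ge:
  assumes "A \<in> sets M" "B \<in> sets M" "\<beta> \<le> 1"
    and "measure M B > 0 \<Longrightarrow> \<beta> \<le> cprob M A B"
  shows "measure M (B - A) \<le> (1 - \<beta>) * measure M B"
proof (cases "measure M B > 0")
  case True
  then have "\<beta> * measure M B \<le> measure M (A \<inter> B)"
    using assms(4) by (simp add: cprob_def le_divide_eq)
  then show ?thesis
    using assms(1,2) by (simp add: finite_measure_Diff' Int_commute algebra_simps)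
next
  case False
  then have "measure M B = 0" using measure_nonneg[of M B] by linarith
  moreover have "measure M (B - A) \<le> measure M B"
    using assms(2) by (intro finite_measure_mono) auto
  ultimately show ?thesis by simp
qed

lemma (in finite_measure) measure_Int_le_of_cprob_le:
  assumes "B \<in> sets M" "0 \<le> \<epsilon>"
    and "measure M B > 0 \<Longrightarrow> cprob M A B \<le> \<epsilon>"
  shows "measure M (A \<inter> B) \<le> \<epsilon> * measure M B"
proof (cases "measure M B > 0")
  case True
  then show ?thesis using assms(3) by (simp add: cprob_def divide_le_eq)
next
  case False
  then have "measure M B = 0" using measure_nonneg[of M B] by linarith
  moreover have "measure M (A \<inter> B) \<le> measure M B"
    using assms(1) by (intro finite_measure_mono) auto
  ultimately show ?thesis by simp
qed

lemma sum_power_le_inverse: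
  fixes \<beta> :: real
  assumes "0 < \<beta>" "\<beta> \<le> 1"
  shows "(\<Sum>k<n. (1 - \<beta>) ^ k) \<le> 1 / \<beta>"
proof -
  have "(\<Sum>k<n. (1 - \<beta>) ^ k) = (1 - (1 - \<beta>) ^ n) / \<beta>"
    using sum_gp_strict[of "1 - \<beta>" n] assms(1) by simp
  also have "\<dots> \<le> 1 / \<beta>"
    using assms by (intro divide_right_mono) auto
  finally show ?thesis .
qed

locale robust_cascade = prob_space D for D :: "'a measure" +
  fixes U :: "'a \<Rightarrow> 'a set" and c :: "'a \<Rightarrow> 'b"
    and \<beta> \<epsilon>' :: real and hs :: "nat \<Rightarrow> 'a \<Rightarrow> 'b" and T :: nat
  assumes space_eq_UNIV: "space D = UNIV"
    and \<beta>_pos: "0 < \<beta>" and \<beta>_le_1: "\<beta> \<le> 1" and \<epsilon>'_nonneg: "0 \<le> \<epsilon>'"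
    and Rset_sets: "\<And>t. 1 \<le> t \<Longrightarrow> t \<le> T \<Longrightarrow> Rset U hs t \<in> sets D"
    and error_sets: "\<And>t. 1 \<le> t \<Longrightarrow> t \<le> T \<Longrightarrow> {x. hs t x \<noteq> c x} \<in> sets D"
    and cprob_bounds: "\<And>t. 1 \<le> t \<Longrightarrow> t \<le> T \<Longrightarrow> measure D (Rbar U hs (t - 1)) > 0 \<Longrightarrow>
           cprob D (Rset U hs t) (Rbar U hs (t - 1)) \<ge> \<beta> \<and>
           cprob D {x. hs t x \<noteq> c x} (Rbar U hs (t - 1)) \<le> \<epsilon>'"
begin

lemma Rbar_sets: "n \<le> T \<Longrightarrow> Rbar U hs n \<in> sets D"
proof (induction n)
  case 0
  show ?case using space_eq_UNIV by (metis Rbar_0 sets.top)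
next
  case (Suc n)
  then show ?case using Rset_sets[of "Suc n"] by (simp add: Rbar_Suc sets.Diff)
qed

lemma measure_Rbar_le: "n \<le> T \<Longrightarrow> measure D (Rbar U hs n) \<le> (1 - \<beta>) ^ n"
proof (induction n)
  case 0
  show ?case using space_eq_UNIV by (simp add: prob_space flip: space_eq_UNIV)
next
  case (Suc n)
  have "measure D (Rbar U hs (Suc n)) \<le> (1 - \<beta>) * measure D (Rbar U hs n)"
    unfolding Rbar_Suc using Suc.prems Rset_sets Rbar_sets \<beta>_le_1 cprob_bounds[of "Suc n"]
    by (intro measure_Diff_le_of_cprob_ge) auto
  also have "\<dots> \<le> (1 - \<beta>) * (1 - \<beta>) ^ n"
    using Suc \<beta>_le_1 by (intro mult_left_mono) auto
  finally show ?case by simp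
qed

lemma measure_stage_error_le:
  assumes "s \<in> {1..T}"
  shows "measure D (Rbar U hs (s - 1) \<inter> {x. hs s x \<noteq> c x}) \<le> \<epsilon>' * (1 - \<beta>) ^ (s - 1)"
proof -
  have "measure D ({x. hs s x \<noteq> c x} \<inter> Rbar U hs (s - 1)) \<le> \<epsilon>' * measure D (Rbar U hs (s - 1))"
    using assms Rbar_sets \<epsilon>'_nonneg cprob_bounds[of s]
    by (intro measure_Int_le_of_cprob_le) auto
  also have "\<dots> \<le> \<epsilon>' * (1 - \<beta>) ^ (s - 1)"
    using assms measure_Rbar_le \<epsilon>'_nonneg by (intro mult_left_mono) auto
  finally show ?thesis by (simp add: Int_commute)
qed

lemma measure_stage_errors_le:
  "measure D (\<Union>s\<in>{1..T}. Rbar U hs (s - 1) \<inter> {x. hs s x \<noteq> c x}) \<le> \<epsilon>' / \<beta>"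
proof -
  have "measure D (\<Union>s\<in>{1..T}. Rbar U hs (s - 1) \<inter> {x. hs s x \<noteq> c x})
      \<le> (\<Sum>s\<in>{1..T}. measure D (Rbar U hs (s - 1) \<inter> {x. hs s x \<noteq> c x}))"
    using Rbar_sets error_sets by (intro finite_measure_subadditive_finite) auto
  also have "\<dots> \<le> (\<Sum>s\<in>{1..T}. \<epsilon>' * (1 - \<beta>) ^ (s - 1))"
    by (intro sum_mono measure_stage_error_le)
  also have "\<dots> = \<epsilon>' * (\<Sum>k<T. (1 - \<beta>) ^ k)"
    unfolding sum_distrib_left by (rule sum.reindex_bij_witness[of _ Suc "\<lambda>s. s - 1"]) auto
  also have "\<dots> \<le> \<epsilon>' * (1 / \<beta>)"
    using \<epsilon>'_nonneg \<beta>_pos \<beta>_le_1 by (intro mult_left_mono sum_power_le_inverse)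
  finally show ?thesis by simp
qed

text \<open>No measurability of the attacked error event is needed: \<open>measure\<close> is \<open>0\<close> off \<open>sets D\<close>.\<close>

lemma measure_CAS_error_le:
  "measure D {x. \<exists>z\<in>U x. CAS U hs T y0 z \<noteq> c x} \<le> \<epsilon>' / \<beta> + (1 - \<beta>) ^ T"
proof -
  let ?errors = "\<Union>s\<in>{1..T}. Rbar U hs (s - 1) \<inter> {x. hs s x \<noteq> c x}"
  have errors_sets: "?errors \<in> sets D"
    by (intro sets.finite_UN sets.Int Rbar_sets error_sets ballI) auto
  have "measure D {x. \<exists>z\<in>U x. CAS U hs T y0 z \<noteq> c x} \<le> measure D (Rbar U hs T \<union> ?errors)"
    by (intro finite_measure_mono CAS_error_subset sets.Un Rbar_sets errors_sets) simp
  also have "\<dots> \<le> measure D (Rbar U hs T) + measure D ?errors"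
    using Rbar_sets errors_sets by (intro measure_Un_le) auto
  also have "\<dots> \<le> (1 - \<beta>) ^ T + \<epsilon>' / \<beta>"
    using measure_Rbar_le measure_stage_errors_le by (intro add_mono) auto
  finally show ?thesis by simp
qed

end

theorem mainTheorem4:
  fixes U :: "'a \<Rightarrow> 'a set" and c :: "'a \<Rightarrow> 'b" and D :: "'a measure"
    and \<beta> \<epsilon>' :: real and hs :: "nat \<Rightarrow> 'a \<Rightarrow> 'b" and T :: nat and y0 :: 'b
  assumes "prob_space D" and "space D = UNIV"
    and "0 < \<beta>" and "\<beta> \<le> 1" and "0 \<le> \<epsilon>'"
    and "\<And>t. 1 \<le> t \<Longrightarrow> t \<le> T \<Longrightarrow> Rset U hs t \<in> sets D"
    and "\<And>t. 1 \<le> t \<Longrightarrow> t \<le> T \<Longrightarrow> {x. hs t x \<noteq> c x} \<in> sets D"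
    and "{x. \<exists>z\<in>U x. CAS U hs T y0 z \<noteq> c x} \<in> sets D"
    and "\<And>t. 1 \<le> t \<Longrightarrow> t \<le> T \<Longrightarrow> measure D (Rbar U hs (t - 1)) > 0 \<Longrightarrow>
           cprob D (Rset U hs t) (Rbar U hs (t - 1)) \<ge> \<beta> \<and>
           cprob D {x. hs t x \<noteq> c x} (Rbar U hs (t - 1)) \<le> \<epsilon>'"
  shows "(\<forall>t\<le>T. measure D (Rbar U hs t) \<le> (1 - \<beta>) ^ t) \<and>
         measure D {x. \<exists>z\<in>U x. CAS U hs T y0 z \<noteq> c x} \<le> \<epsilon>' / \<beta> + (1 - \<beta>) ^ T"
proof -
  interpret robust_cascade D U c \<beta> \<epsilon>' hs T
    by (intro robust_cascade.intro robust_cascade_axioms.intro assms(1)) (fact assms)+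
  show ?thesis
    using measure_Rbar_le measure_CAS_error_le by blast
qed

end
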